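(* Let $\theta=(k_r)$ be a lacunary sequence, $m\ge0$ an integer, $0<\beta\le1$ and $0<p<\infty$. If $\liminf_r q_r>1$, then $w_p^\beta(F,\Delta^m)\subseteq N_\theta^\beta(p,F,\Delta^m)$.
   Context: A fuzzy number is a map $X:\mathbb{R}\to[0,1]$ which is normal, fuzzy convex, upper semicontinuous, with compact closure of $\{t:X(t)>0\}$; $L(\mathbb{R})$ is the set of fuzzy numbers. Level sets $[X]^\alpha=\{t:X(t)\ge\alpha\}$ ($\alpha\in(0,1]$), $[X]^0=\overline{\{t:X(t)>0\}}$, are compact intervals $[u^\alpha,v^\alpha]$. Subtraction: $[X-Y]^\alpha=[u_1^\alpha-v_2^\alpha,v_1^\alpha-u_2^\alpha]$. Metric: $d(X,Y)=\sup_{\alpha\in[0,1]}\max\{|u_1^\alpha-u_2^\alpha|,|v_1^\alpha-v_2^\alpha|\}$. $(\Delta^0X)_k=X_k$, $(\Delta^1X)_k=X_k-X_{k+1}$, $(\Delta^mX)_k=(\Delta^1(\Delta^{m-1}X))_k$. A lacunary sequence is an increasing integer sequence $\theta=(k_r)_{r\ge0}$ with $k_0=0$, $h_r=k_r-k_{r-1}\to\infty$; $I_r=(k_{r-1},k_r]$, $q_r=k_r/k_{r-1}$. $N_\theta^\beta(p,F,\Delta^m)$: sequences $X$ of fuzzy numbers with some $X_0\in L(\mathbb{R})$ such that $\lim_r\frac{1}{h_r^\beta}\sum_{k\in I_r}d(\Delta^mX_k,X_0)^p=0$. $w_p^\beta(F,\Delta^m)$: sequences $X$ with some $X_0\in L(\mathbb{R})$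 such that $\lim_{n\to\infty}\frac{1}{n^\beta}\sum_{k=1}^n d(\Delta^mX_k,X_0)^p=0$. *)

theory Defs
  imports "HOL-Analysis.Analysis"
begin

type_synonym fuzzy = "real \<Rightarrow> real"

definition usc :: "fuzzy \<Rightarrow> bool" where
  "usc X \<longleftrightarrow> (\<forall>t a. X t < a \<longrightarrow> (\<exists>e>0. \<forall>s. \<bar>s - t\<bar> < e \<longrightarrow> X s < a))"

definition fuzzy_number :: "fuzzy \<Rightarrow> bool" where
  "fuzzy_number X \<longleftrightarrow>
     (\<forall>t. 0 \<le> X t \<and> X t \<le> 1) \<and>
     (\<exists>t. X t = 1) \<and>
     (\<forall>s t (l::real). 0 \<le> l \<and> l \<le> 1 \<longrightarrow> min (X s) (X t) \<le> X (l * s + (1 - l) * t)) \<and>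
     usc X \<and>
     compact (closure {t. X t > 0})"

definition level :: "fuzzy \<Rightarrow> real \<Rightarrow> real set" where
  "level X a = (if a = 0 then closure {t. X t > 0} else {t. X t \<ge> a})"

definition lo :: "fuzzy \<Rightarrow> real \<Rightarrow> real" where
  "lo X a = Inf (level X a)"

definition hi :: "fuzzy \<Rightarrow> real \<Rightarrow> real" where
  "hi X a = Sup (level X a)"

text \<open>Subtraction: the fuzzy number whose alpha-level sets are
  [lo X a - hi Y a, hi X a - lo Y a]; it is recovered from its level sets by
  Z t = sup {a : t in [Z]^a}.\<close>
definition fuzzy_sub :: "fuzzy \<Rightarrow> fuzzy \<Rightarrow> fuzzy" where
  "fuzzy_sub X Y = (\<lambda>t. Sup ({0} \<union> {a. 0 < a \<and> a \<le> 1 \<and>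
        t \<in> {lo X a - hi Y a .. hi X a - lo Y a}}))"

definition fdist :: "fuzzy \<Rightarrow> fuzzy \<Rightarrow> real" where
  "fdist X Y = (SUP a\<in>{0..1}. max \<bar>lo X a - lo Y a\<bar> \<bar>hi X a - hi Y a\<bar>)"

fun fdelta :: "nat \<Rightarrow> (nat \<Rightarrow> fuzzy) \<Rightarrow> nat \<Rightarrow> fuzzy" where
  "fdelta 0 X k = X k"
| "fdelta (Suc m) X k = fuzzy_sub (fdelta m X k) (fdelta m X (Suc k))"

definition lacunary :: "(nat \<Rightarrow> nat) \<Rightarrow> bool" where
  "lacunary \<theta> \<longleftrightarrow> strict_mono \<theta> \<and> \<theta> 0 = 0 \<and>
     filterlim (\<lambda>r. real (\<theta> (Suc r) - \<theta> r)) at_top sequentially"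

text \<open>h_r for r \<ge> 1 is indexed here as h (Suc r') etc.\<close>
definition N_theta :: "(nat \<Rightarrow> nat) \<Rightarrow> real \<Rightarrow> real \<Rightarrow> nat \<Rightarrow> (nat \<Rightarrow> fuzzy) set" where
  "N_theta \<theta> \<beta> p m = {X. (\<forall>k. fuzzy_number (X k)) \<and>
     (\<exists>L. fuzzy_number L \<and>
        (\<lambda>r. (1 / real (\<theta> (Suc r) - \<theta> r) powr \<beta>) *
              (\<Sum>k\<in>{\<theta> r<..\<theta> (Suc r)}. fdist (fdelta m X k) L powr p)) \<longlonglongrightarrow> 0)}"

definition w_space :: "real \<Rightarrow> real \<Rightarrow> nat \<Rightarrow> (nat \<Rightarrow> fuzzy) set" where
  "w_space p \<beta> m = {X. (\<forall>k. fuzzy_number (X k)) \<and>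
     (\<exists>L. fuzzy_number L \<and>
        (\<lambda>n. (1 / real n powr \<beta>) *
              (\<Sum>k=1..n. fdist (fdelta m X k) L powr p)) \<longlonglongrightarrow> 0)}"

end

theory Submission
  imports Defs
begin

text \<open>Only the nonnegative real sequence \<open>a k = d(\<Delta>\<^sup>m X k, X\<^sub>0) ^ p\<close> matters.
  Eventually \<open>k r > c \<cdot> k (r-1)\<close> for some \<open>c > 1\<close>, hence \<open>h r \<ge> (c-1)/c \<cdot> k r\<close>; so the
  block mean \<open>h r ^ -\<beta> \<cdot> \<Sum>k\<in>I r. a k\<close> is at most \<open>(c/(c-1)) ^ \<beta>\<close> times the mean
  \<open>(k r) ^ -\<beta> \<cdot> \<Sum>k=1..k r. a k\<close>, which tends to \<open>0\<close> along the subsequence \<open>k r\<close>.\<close>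

lemma inverse_powr_gap_le:
  fixes c s t \<beta> :: real
  assumes "1 < c" "0 \<le> t" "c * t < s" "0 \<le> \<beta>"
  shows "1 / (s - t) powr \<beta> \<le> (c / (c - 1)) powr \<beta> / s powr \<beta>"
proof -
  have s_pos: "0 < s"
    using assms by (smt (verit) mult_nonneg_nonneg)
  have frac_pos: "0 < (c - 1) / c"
    using assms(1) by simp
  have "(c - 1) / c * s \<le> s - t"
  proof -
    have "t \<le> s / c" using assms(1,3) by (simp add: field_simps)
    then show ?thesis using assms(1) by (simp add: field_simps)
  qed
  then have "((c - 1) / c * s) powr \<beta> \<le> (s - t) powr \<beta>"
    using frac_pos s_pos assms(4) by (intro powr_mono2) (auto simp del: times_divide_eq_left)
  then have "((c - 1) / c) powr \<beta> * s powr \<beta> \<le> (s - t) powr \<beta>"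
    using frac_pos s_pos by (simp only: powr_mult less_imp_le)
  moreover have "0 < ((c - 1) / c) powr \<beta> * s powr \<beta>"
    using frac_pos s_pos by (intro mult_pos_pos) auto
  ultimately have "1 / (s - t) powr \<beta> \<le> 1 / (((c - 1) / c) powr \<beta> * s powr \<beta>)"
    by (intro frac_le) auto
  also have "\<dots> = (c / (c - 1)) powr \<beta> / s powr \<beta>"
    using frac_pos assms(1) by (simp add: powr_divide)
  finally show ?thesis .
qed

lemma block_mean_le_scaled_mean:
  fixes a :: "nat \<Rightarrow> real" and c \<beta> :: real and s t :: nat
  assumes nonneg: "\<And>k. 0 \<le> a k"
    and "1 < c" "c * real t < real s" "0 \<le> \<beta>"
  shows "1 / real (s - t) powr \<beta> * (\<Sum>k\<in>{t<..s}. a k)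
           \<le> (c / (c - 1)) powr \<beta> * (1 / real s powr \<beta> * (\<Sum>k=1..s. a k))"
proof -
  have "real t < real s"
    using assms(2,3) by (smt (verit) mult_less_cancel_right2 of_nat_0_le_iff)
  then have gap: "real (s - t) = real s - real t"
    by simp
  have "1 / real (s - t) powr \<beta> \<le> (c / (c - 1)) powr \<beta> / real s powr \<beta>"
    unfolding gap using assms(2-4) by (intro inverse_powr_gap_le) auto
  moreover have "(\<Sum>k\<in>{t<..s}. a k) \<le> (\<Sum>k=1..s. a k)"
    using nonneg by (intro sum_mono2) auto
  ultimately have "1 / real (s - t) powr \<beta> * (\<Sum>k\<in>{t<..s}. a k)
                   \<le> (c / (c - 1)) powr \<beta> / real s powr \<beta> * (\<Sum>k=1..s. a k)"
    using nonneg by (intro mult_mono) (auto intro: sum_nonneg)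
  then show ?thesis by simp
qed

lemma lacunary_block_means_tendsto_zero:
  fixes \<theta> :: "nat \<Rightarrow> nat" and a :: "nat \<Rightarrow> real" and \<beta> :: real
  assumes "strict_mono \<theta>"
    and ratio: "liminf (\<lambda>r. ereal (real (\<theta> (Suc r)) / real (\<theta> r))) > 1"
    and "0 \<le> \<beta>" and nonneg: "\<And>k. 0 \<le> a k"
    and means: "(\<lambda>n. 1 / real n powr \<beta> * (\<Sum>k=1..n. a k)) \<longlonglongrightarrow> 0"
  shows "(\<lambda>r. 1 / real (\<theta> (Suc r) - \<theta> r) powr \<beta> * (\<Sum>k\<in>{\<theta> r<..\<theta> (Suc r)}. a k))
           \<longlonglongrightarrow> 0"
proof -
  obtain z where "1 < z" "z < liminf (\<lambda>r. ereal (real (\<theta> (Suc r)) / real (\<theta> r)))"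
    using ratio by (rule ereal_dense2[elim_format]) blast
  then obtain c :: real where c: "1 < c" and "ereal c < liminf (\<lambda>r. ereal (real (\<theta> (Suc r)) / real (\<theta> r)))"
    by (cases z) auto
  from less_LiminfD[OF this(2)]
  have "eventually (\<lambda>r. c < real (\<theta> (Suc r)) / real (\<theta> r)) sequentially"
    by simp
  then have gaps: "eventually (\<lambda>r. c * real (\<theta> r) < real (\<theta> (Suc r))) sequentially"
  proof eventually_elim
    case (elim r)
    then have "0 < real (\<theta> r)"
      using c by (cases "\<theta> r = 0") auto
    with elim show ?case
      by (simp add: pos_less_divide_eq)
  qed
  let ?M = "\<lambda>n. 1 / real n powr \<beta> * (\<Sum>k=1..n. a k)"
  have upper: "eventually (\<lambda>r. 1 / real (\<theta> (Suc r) - \<theta> r) powr \<beta> * (\<Sum>k\<in>{\<theta> r<..\<theta> (Suc r)}. a k)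
      \<le> (c / (c - 1)) powr \<beta> * ?M (\<theta> (Suc r))) sequentially"
    using gaps
  proof eventually_elim
    case (elim r)
    from block_mean_le_scaled_mean[OF nonneg c elim assms(3)] show ?case .
  qed
  have "strict_mono (\<lambda>r. \<theta> (Suc r))"
    using assms(1) by (simp add: strict_mono_def)
  from LIMSEQ_subseq_LIMSEQ[OF means this]
  have "(\<lambda>r. ?M (\<theta> (Suc r))) \<longlonglongrightarrow> 0"
    by (simp add: o_def)
  then have upper_lim: "(\<lambda>r. (c / (c - 1)) powr \<beta> * ?M (\<theta> (Suc r))) \<longlonglongrightarrow> 0"
    using tendsto_mult_right_zero by blast
  have lower: "eventually (\<lambda>r. 0 \<le> 1 / real (\<theta> (Suc r) - \<theta> r) powr \<beta>
      * (\<Sum>k\<in>{\<theta> r<..\<theta> (Suc r)}. a k)) sequentially"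
    using nonneg by (simp add: sum_nonneg)
  show ?thesis
    by (rule tendsto_sandwich[OF lower upper tendsto_const upper_lim])
qed

theorem theorem2p14:
  fixes \<theta> :: "nat \<Rightarrow> nat" and m :: nat and \<beta> p :: real
  assumes "lacunary \<theta>"
    and "0 < \<beta>" and "\<beta> \<le> 1" and "0 < p"
    and "liminf (\<lambda>r. ereal (real (\<theta> (Suc r)) / real (\<theta> r))) > 1"
  shows "w_space p \<beta> m \<subseteq> N_theta \<theta> \<beta> p m"
proof
  fix X assume "X \<in> w_space p \<beta> m"
  then obtain L where "\<forall>k. fuzzy_number (X k)" "fuzzy_number L"
    and "(\<lambda>n. 1 / real n powr \<beta> * (\<Sum>k=1..n. fdist (fdelta m X k) L powr p)) \<longlonglongrightarrow> 0"
    unfolding w_space_def by blast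
  moreover have "strict_mono \<theta>"
    using assms(1) unfolding lacunary_def by simp
  ultimately show "X \<in> N_theta \<theta> \<beta> p m"
    unfolding N_theta_def
    using lacunary_block_means_tendsto_zero[where a = "\<lambda>k. fdist (fdelta m X k) L powr p"] assms(2,5)
    by auto
qed

end
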